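(* $\mathsf{ICK}\oplus(p\mathrel{\Box\!\!\!\rightarrow} p)$ is sound and complete with respect to the class of conditional frames $(X,\leq,\mathcal{R})$ satisfying $R_a[x]\subseteq a$ for all $x\in X$ and all upsets $a$.
   Context: Formulas: $\phi ::= p\mid\bot\mid\phi\wedge\phi\mid\phi\vee\phi\mid\phi\to\phi\mid\phi\mathrel{\Box\!\!\!\rightarrow}\phi$. $\mathsf{ICK}\oplus\Gamma$ is the smallest set containing intuitionistic propositional logic, $\Gamma$, $(p\mathrel{\Box\!\!\!\rightarrow}(q\wedge r))\leftrightarrow((p\mathrel{\Box\!\!\!\rightarrow} q)\wedge(p\mathrel{\Box\!\!\!\rightarrow} r))$ and $(p\mathrel{\Box\!\!\!\rightarrow}\top)\leftrightarrow\top$, closed under uniform substitution, modus ponens and congruence rules for both arguments of $\mathrel{\Box\!\!\!\rightarrow}$. A conditional frame is $(X,\leq,\mathcal{R})$, $(X,\leq)$ a nonempty preorder, $\mathcal{R}=\{R_a\mid a\text{ an upset}\}$ with $(\leq\circ R_a)\subseteq(R_a\circ\leq)$; valuations assign upsets to letters and $x\models\phi\mathrel{\Box\!\!\!\rightarrow}\psi$ iff every $y$ with $xR_{V(\phi)}y$ satisfies $\psi$. $R_a[x]=\{y\mid xR_ay\}$. *)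

theory Defs
  imports Main
begin

datatype form =
    Atom nat
  | Bot
  | And form form
  | Or form form
  | Imp form form
  | Cond form form

definition Top :: form where "Top = Imp Bot Bot"

definition Iff :: "form \<Rightarrow> form \<Rightarrow> form" where
  "Iff a b = And (Imp a b) (Imp b a)"

primrec subst :: "(nat \<Rightarrow> form) \<Rightarrow> form \<Rightarrow> form" where
  "subst s (Atom n) = s n"
| "subst s Bot = Bot"
| "subst s (And a b) = And (subst s a) (subst s b)"
| "subst s (Or a b) = Or (subst s a) (subst s b)"
| "subst s (Imp a b) = Imp (subst s a) (subst s b)"
| "subst s (Cond a b) = Cond (subst s a) (subst s b)"

inductive_set ICK :: "form set \<Rightarrow> form set" for \<Gamma> :: "form set" where
  ax_K: "Imp a (Imp b a) \<in> ICK \<Gamma>"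
| ax_S: "Imp (Imp a (Imp b c)) (Imp (Imp a b) (Imp a c)) \<in> ICK \<Gamma>"
| ax_conjE1: "Imp (And a b) a \<in> ICK \<Gamma>"
| ax_conjE2: "Imp (And a b) b \<in> ICK \<Gamma>"
| ax_conjI: "Imp a (Imp b (And a b)) \<in> ICK \<Gamma>"
| ax_disjI1: "Imp a (Or a b) \<in> ICK \<Gamma>"
| ax_disjI2: "Imp b (Or a b) \<in> ICK \<Gamma>"
| ax_disjE: "Imp (Imp a c) (Imp (Imp b c) (Imp (Or a b) c)) \<in> ICK \<Gamma>"
| ax_efq: "Imp Bot a \<in> ICK \<Gamma>"
| ax_gamma: "g \<in> \<Gamma> \<Longrightarrow> g \<in> ICK \<Gamma>"
| ax_C: "Iff (Cond (Atom 0) (And (Atom 1) (Atom 2)))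
             (And (Cond (Atom 0) (Atom 1)) (Cond (Atom 0) (Atom 2))) \<in> ICK \<Gamma>"
| ax_N: "Iff (Cond (Atom 0) Top) Top \<in> ICK \<Gamma>"
| us: "a \<in> ICK \<Gamma> \<Longrightarrow> subst s a \<in> ICK \<Gamma>"
| mp: "Imp a b \<in> ICK \<Gamma> \<Longrightarrow> a \<in> ICK \<Gamma> \<Longrightarrow> b \<in> ICK \<Gamma>"
| cong_l: "Iff a b \<in> ICK \<Gamma> \<Longrightarrow> Iff (Cond a c) (Cond b c) \<in> ICK \<Gamma>"
| cong_r: "Iff c d \<in> ICK \<Gamma> \<Longrightarrow> Iff (Cond a c) (Cond a d) \<in> ICK \<Gamma>"

definition ICK_id :: "form set" where
  "ICK_id = ICK {Cond (Atom 0) (Atom 0)}"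

text \<open>A frame: carrier X, preorder le on X, and for every set a a relation R a;
only the R a for upsets a of (X, le) matter.\<close>

definition upset :: "'w set \<Rightarrow> ('w \<Rightarrow> 'w \<Rightarrow> bool) \<Rightarrow> 'w set \<Rightarrow> bool" where
  "upset X le a \<longleftrightarrow> a \<subseteq> X \<and> (\<forall>x\<in>a. \<forall>y\<in>X. le x y \<longrightarrow> y \<in> a)"

text \<open>The condition (\<le> \<circ> R_a) \<subseteq> (R_a \<circ> \<le>) is read in diagrammatic order:
 if x \<le> x' and x' R_a y' then there is y with x R_a y and y \<le> y'.\<close>

definition cond_frame :: "'w set \<Rightarrow> ('w \<Rightarrow> 'w \<Rightarrow> bool) \<Rightarrow> ('w set \<Rightarrow> 'w \<Rightarrow> 'w \<Rightarrow> bool) \<Rightarrow> bool" where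
  "cond_frame X le R \<longleftrightarrow>
     X \<noteq> {} \<and>
     (\<forall>x\<in>X. le x x) \<and>
     (\<forall>x\<in>X. \<forall>y\<in>X. \<forall>z\<in>X. le x y \<longrightarrow> le y z \<longrightarrow> le x z) \<and>
     (\<forall>a. upset X le a \<longrightarrow>
        (\<forall>x y. R a x y \<longrightarrow> x \<in> X \<and> y \<in> X) \<and>
        (\<forall>x\<in>X. \<forall>x'\<in>X. \<forall>y'\<in>X. le x x' \<longrightarrow> R a x' y' \<longrightarrow>
           (\<exists>y\<in>X. R a x y \<and> le y y')))"

primrec sat :: "'w set \<Rightarrow> ('w \<Rightarrow> 'w \<Rightarrow> bool) \<Rightarrow> ('w set \<Rightarrow> 'w \<Rightarrow> 'w \<Rightarrow> bool)
                 \<Rightarrow> (nat \<Rightarrow> 'w set) \<Rightarrow> 'w \<Rightarrow> form \<Rightarrow> bool" where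
  "sat X le R V x (Atom n) = (x \<in> V n)"
| "sat X le R V x Bot = False"
| "sat X le R V x (And a b) = (sat X le R V x a \<and> sat X le R V x b)"
| "sat X le R V x (Or a b) = (sat X le R V x a \<or> sat X le R V x b)"
| "sat X le R V x (Imp a b) =
     (\<forall>y\<in>X. le x y \<longrightarrow> sat X le R V y a \<longrightarrow> sat X le R V y b)"
| "sat X le R V x (Cond a b) =
     (\<forall>y. R {z\<in>X. sat X le R V z a} x y \<longrightarrow> sat X le R V y b)"

definition valid_frame :: "'w set \<Rightarrow> ('w \<Rightarrow> 'w \<Rightarrow> bool) \<Rightarrow> ('w set \<Rightarrow> 'w \<Rightarrow> 'w \<Rightarrow> bool)
                            \<Rightarrow> form \<Rightarrow> bool" where
  "valid_frame X le R \<phi> \<longleftrightarrow>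
     (\<forall>V. (\<forall>n. upset X le (V n)) \<longrightarrow> (\<forall>x\<in>X. sat X le R V x \<phi>))"

definition id_frame :: "'w set \<Rightarrow> ('w \<Rightarrow> 'w \<Rightarrow> bool) \<Rightarrow> ('w set \<Rightarrow> 'w \<Rightarrow> 'w \<Rightarrow> bool) \<Rightarrow> bool" where
  "id_frame X le R \<longleftrightarrow>
     cond_frame X le R \<and> (\<forall>a. upset X le a \<longrightarrow> (\<forall>x\<in>X. {y. R a x y} \<subseteq> a))"

definition valid_class :: "'w itself \<Rightarrow> form \<Rightarrow> bool" where
  "valid_class _ \<phi> \<longleftrightarrow>
     (\<forall>(X::'w set) le R. id_frame X le R \<longrightarrow> valid_frame X le R \<phi>)"

end

theory Submission
  imports Defs
begin

(*
  Soundness: truth sets are upsets and commute with substitution, so every axiom and rule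
  of ICK is valid on every conditional frame, and p \<box>\<rightarrow> p is valid on a frame
  as soon as every R_a-successor of a world lies in a.

  Completeness: in the canonical frame the worlds are the prime theories ordered by
  inclusion, and T R_a U holds iff a is the set of prime theories containing some \<phi> and
  U contains every \<psi> with \<phi> \<box>\<rightarrow> \<psi> in T.  The truth lemma rests on Lindenbaum's
  lemma and on the closure of {\<psi>. \<phi> \<box>\<rightarrow> \<psi> \<in> T} under derivability.  Since
  \<phi> \<box>\<rightarrow> \<phi> is a theorem, every such U contains \<phi>, so the canonical frame
  satisfies R_a[T] \<subseteq> a.
*)

lemma cond_frame_refl: "cond_frame X le R \<Longrightarrow> x \<in> X \<Longrightarrow> le x x"
  by (simp add: cond_frame_def)

lemma cond_frame_trans:
  "cond_frame X le R \<Longrightarrow> x \<in> X \<Longrightarrow> y \<in> X \<Longrightarrow> z \<in> X \<Longrightarrow> le x y \<Longrightarrow> le y z \<Longrightarrow> le x z"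
  unfolding cond_frame_def by (elim conjE) blast

lemma cond_frame_rel_carrier:
  "cond_frame X le R \<Longrightarrow> upset X le a \<Longrightarrow> R a x y \<Longrightarrow> x \<in> X \<and> y \<in> X"
  unfolding cond_frame_def by (elim conjE) blast

lemma cond_frame_rel_back:
  assumes "cond_frame X le R" "upset X le a" "x \<in> X" "le x x'" "R a x' y'"
  shows "\<exists>y\<in>X. R a x y \<and> le y y'"
  using assms cond_frame_rel_carrier[OF assms(1,2,5)] unfolding cond_frame_def by (elim conjE) blast

lemma upset_sat:
  assumes frame: "cond_frame X le R" and V: "\<forall>n. upset X le (V n)"
  shows "upset X le {z\<in>X. sat X le R V z \<phi>}"
proof (induction \<phi>)
  case (Atom n)
  then show ?case using V unfolding upset_def by auto
next
  case (Imp a b)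
  have "sat X le R V x' (Imp a b)"
    if "x \<in> X" "sat X le R V x (Imp a b)" "x' \<in> X" "le x x'" for x x'
    using that cond_frame_trans[OF frame, of x x'] by auto
  then show ?case unfolding upset_def by blast
next
  case (Cond a b)
  let ?A = "{z\<in>X. sat X le R V z a}"
  have "sat X le R V x' (Cond a b)"
    if x: "x \<in> X" "sat X le R V x (Cond a b)" and "le x x'" for x x'
  proof (unfold sat.simps, intro allI impI)
    fix y' assume "R ?A x' y'"
    then obtain y where "R ?A x y" "le y y'"
      using cond_frame_rel_back[OF frame Cond.IH(1) x(1) \<open>le x x'\<close>] by blast
    moreover have "y \<in> X" "y' \<in> X"
      using cond_frame_rel_carrier[OF frame Cond.IH(1)] \<open>R ?A x y\<close> \<open>R ?A x' y'\<close> by blast+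
    ultimately show "sat X le R V y' b"
      using Cond.IH(2) x(2) unfolding upset_def by auto
  qed
  then show ?case unfolding upset_def by blast
qed (auto simp: upset_def)

lemma sat_persistent:
  "cond_frame X le R \<Longrightarrow> \<forall>n. upset X le (V n) \<Longrightarrow> x \<in> X \<Longrightarrow> y \<in> X \<Longrightarrow> le x y
    \<Longrightarrow> sat X le R V x \<phi> \<Longrightarrow> sat X le R V y \<phi>"
  using upset_sat unfolding upset_def by blast

lemma sat_subst:
  assumes frame: "cond_frame X le R" and V: "\<forall>n. upset X le (V n)" and "x \<in> X"
  shows "sat X le R V x (subst s \<phi>) \<longleftrightarrow> sat X le R (\<lambda>n. {z\<in>X. sat X le R V z (s n)}) x \<phi>"
  using \<open>x \<in> X\<close>
proof (induction \<phi> arbitrary: x)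
  case (Cond a b)
  let ?V' = "\<lambda>n. {z\<in>X. sat X le R V z (s n)}"
  let ?A = "{z\<in>X. sat X le R V z (subst s a)}"
  have A: "?A = {z\<in>X. sat X le R ?V' z a}"
    using Cond.IH(1) by auto
  have "R ?A x y \<Longrightarrow> y \<in> X" for y
    using cond_frame_rel_carrier[OF frame upset_sat[OF frame V]] by blast
  then show ?case
    using Cond.IH(2) by (auto simp flip: A)
qed auto

lemma valid_frameI:
  "(\<And>V x. \<forall>n. upset X le (V n) \<Longrightarrow> x \<in> X \<Longrightarrow> sat X le R V x \<phi>) \<Longrightarrow> valid_frame X le R \<phi>"
  unfolding valid_frame_def by blast

lemma valid_frameD:
  "valid_frame X le R \<phi> \<Longrightarrow> \<forall>n. upset X le (V n) \<Longrightarrow> x \<in> X \<Longrightarrow> sat X le R V x \<phi>"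
  unfolding valid_frame_def by blast

lemma valid_frame_IffD:
  assumes "cond_frame X le R" "valid_frame X le R (Iff a b)" "\<forall>n. upset X le (V n)" "x \<in> X"
  shows "sat X le R V x a \<longleftrightarrow> sat X le R V x b"
proof -
  have "sat X le R V x (Iff a b)"
    using valid_frameD[OF assms(2-4)] .
  then show ?thesis
    using assms(4) cond_frame_refl[OF assms(1,4)] unfolding Iff_def by auto
qed

theorem ICK_sound:
  assumes frame: "cond_frame X le R" and \<Gamma>: "\<forall>g\<in>\<Gamma>. valid_frame X le R g"
    and "\<phi> \<in> ICK \<Gamma>"
  shows "valid_frame X le R \<phi>"
  using \<open>\<phi> \<in> ICK \<Gamma>\<close>
proof (induction rule: ICK.induct)
  case (ax_K a b)
  show ?case
    by (rule valid_frameI) (use sat_persistent[OF frame] in auto)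
next
  case (ax_S a b c)
  show ?case
  proof (rule valid_frameI, unfold sat.simps, intro ballI impI)
    fix V x y z w
    assume "x \<in> X" "y \<in> X" "le x y"
      and abc: "\<forall>z\<in>X. le y z \<longrightarrow> sat X le R V z a \<longrightarrow>
        (\<forall>w\<in>X. le z w \<longrightarrow> sat X le R V w b \<longrightarrow> sat X le R V w c)"
      and "z \<in> X" "le y z" and ab: "\<forall>w\<in>X. le z w \<longrightarrow> sat X le R V w a \<longrightarrow> sat X le R V w b"
      and "w \<in> X" "le z w" "sat X le R V w a"
    moreover have "le y w" "le w w"
      using cond_frame_trans[OF frame] cond_frame_refl[OF frame] calculation by blast+
    ultimately show "sat X le R V w c"
      using abc ab by blast
  qed
next
  case (ax_conjI a b)
  show ?case
    by (rule valid_frameI) (use sat_persistent[OF frame] in auto)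
next
  case (ax_disjE a c b)
  show ?case
  proof (rule valid_frameI, unfold sat.simps, intro ballI impI)
    fix V x y z w
    assume "x \<in> X" "y \<in> X" "le x y"
      and "\<forall>w\<in>X. le y w \<longrightarrow> sat X le R V w a \<longrightarrow> sat X le R V w c"
      and "z \<in> X" "le y z" and "\<forall>w\<in>X. le z w \<longrightarrow> sat X le R V w b \<longrightarrow> sat X le R V w c"
      and "w \<in> X" "le z w" "sat X le R V w a \<or> sat X le R V w b"
    moreover have "le y w"
      using cond_frame_trans[OF frame] calculation by blast
    ultimately show "sat X le R V w c" by blast
  qed
next
  case (ax_gamma g)
  then show ?case using \<Gamma> by blast
next
  case ax_C
  show ?case
    by (rule valid_frameI) (auto simp: Iff_def)
next
  case ax_N
  show ?case
    by (rule valid_frameI) (simp add: Iff_def Top_def)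
next
  case (us a s)
  show ?case
    by (rule valid_frameI)
      (simp add: sat_subst[OF frame] valid_frameD[OF us.IH] upset_sat[OF frame])
next
  case (mp a b)
  show ?case
    by (rule valid_frameI)
      (use valid_frameD[OF mp.IH(1)] valid_frameD[OF mp.IH(2)] cond_frame_refl[OF frame] in auto)
next
  case (cong_l a b c)
  show ?case
  proof (rule valid_frameI)
    fix V x assume "\<forall>n::nat. upset X le (V n)"
    then have "{z\<in>X. sat X le R V z a} = {z\<in>X. sat X le R V z b}"
      using valid_frame_IffD[OF frame cong_l.IH] by blast
    then show "sat X le R V x (Iff (Cond a c) (Cond b c))"
      by (simp add: Iff_def)
  qed
next
  case (cong_r c d a)
  show ?case
  proof (rule valid_frameI)
    fix V x assume V: "\<forall>n::nat. upset X le (V n)"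
    let ?A = "{z\<in>X. sat X le R V z a}"
    have "sat X le R V y c \<longleftrightarrow> sat X le R V y d" if "R ?A z y" for z y
      using valid_frame_IffD[OF frame cong_r.IH V]
        cond_frame_rel_carrier[OF frame upset_sat[OF frame V] that] by blast
    then show "sat X le R V x (Iff (Cond a c) (Cond a d))"
      by (simp add: Iff_def)
  qed
qed (rule valid_frameI, simp)+

lemma id_frame_valid_Cond_refl:
  assumes "id_frame X le R"
  shows "valid_frame X le R (Cond (Atom 0) (Atom 0))"
proof (rule valid_frameI)
  fix V x assume V: "\<forall>n::nat. upset X le (V n)" and "x \<in> X"
  then have "R (V 0) x y \<Longrightarrow> y \<in> V 0" for y
    using assms unfolding id_frame_def by blast
  moreover have "{z\<in>X. z \<in> V 0} = V 0"
    using V unfolding upset_def by blast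
  ultimately show "sat X le R V x (Cond (Atom 0) (Atom 0))" by simp
qed

context
  fixes \<Gamma> :: "form set"
begin

inductive derivable :: "form set \<Rightarrow> form \<Rightarrow> bool" for H :: "form set" where
  hyp: "\<phi> \<in> H \<Longrightarrow> derivable H \<phi>"
| ICK: "\<phi> \<in> ICK \<Gamma> \<Longrightarrow> derivable H \<phi>"
| mp: "derivable H (Imp a b) \<Longrightarrow> derivable H a \<Longrightarrow> derivable H b"

lemma ICK_imp_refl: "Imp a a \<in> ICK \<Gamma>"
  by (rule ICK.mp[OF ICK.mp[OF ICK.ax_S ICK.ax_K] ICK.ax_K[of a a]])

lemma ICK_Top: "Top \<in> ICK \<Gamma>"
  unfolding Top_def by (rule ICK_imp_refl)

lemma ICK_Cond_And: "Iff (Cond c (And a b)) (And (Cond c a) (Cond c b)) \<in> ICK \<Gamma>"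
  using ICK.us[OF ICK.ax_C, of "\<lambda>n. if n = 0 then c else if n = 1 then a else b"]
  by (simp add: Iff_def)

lemma ICK_Cond_Top: "Iff (Cond c Top) Top \<in> ICK \<Gamma>"
  using ICK.us[OF ICK.ax_N, of "\<lambda>_. c"] by (simp add: Iff_def Top_def)

lemma derivable_mono: "derivable H \<phi> \<Longrightarrow> H \<subseteq> H' \<Longrightarrow> derivable H' \<phi>"
  by (induction rule: derivable.induct) (auto intro: derivable.intros)

lemma derivable_deduction: "derivable (insert a H) b \<Longrightarrow> derivable H (Imp a b)"
proof (induction rule: derivable.induct)
  case (hyp \<phi>)
  then show ?case
    using ICK_imp_refl by (metis ICK.ax_K derivable.hyp derivable.ICK derivable.mp insertE)
next
  case (ICK \<phi>)
  then show ?case by (meson ICK.ax_K derivable.ICK derivable.mp)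
next
  case (mp x y)
  then show ?case by (meson ICK.ax_S derivable.ICK derivable.mp)
qed

lemma derivable_empty: "derivable {} \<phi> \<longleftrightarrow> \<phi> \<in> ICK \<Gamma>"
proof
  show "derivable {} \<phi> \<Longrightarrow> \<phi> \<in> ICK \<Gamma>"
    by (induction rule: derivable.induct) (auto intro: ICK.mp)
qed (rule derivable.ICK)

lemma derivable_finite_subset:
  "derivable H \<phi> \<Longrightarrow> \<exists>F. finite F \<and> F \<subseteq> H \<and> derivable F \<phi>"
proof (induction rule: derivable.induct)
  case (hyp \<phi>)
  then show ?case by (meson derivable.hyp empty_subsetI finite.intros insert_subset insertI1)
next
  case (ICK \<phi>)
  then show ?case by (meson derivable.ICK empty_subsetI finite.emptyI)
next
  case (mp a b)
  then obtain F1 F2 where "finite F1" "F1 \<subseteq> H" "derivable F1 (Imp a b)"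
    and "finite F2" "F2 \<subseteq> H" "derivable F2 a" by blast
  then show ?case
    by (meson derivable.mp derivable_mono finite_UnI le_sup_iff sup.cobounded1 sup.cobounded2)
qed

lemma derivable_AndI: "derivable H a \<Longrightarrow> derivable H b \<Longrightarrow> derivable H (And a b)"
  by (meson ICK.ax_conjI derivable.ICK derivable.mp)

lemma derivable_AndD:
  "derivable H (And a b) \<Longrightarrow> derivable H a" "derivable H (And a b) \<Longrightarrow> derivable H b"
  by (meson ICK.ax_conjE1 ICK.ax_conjE2 derivable.ICK derivable.mp)+

lemma derivable_IffI: "derivable H (Imp a b) \<Longrightarrow> derivable H (Imp b a) \<Longrightarrow> derivable H (Iff a b)"
  unfolding Iff_def by (rule derivable_AndI)

lemma derivable_IffD: "derivable H (Iff a b) \<Longrightarrow> derivable H a \<Longrightarrow> derivable H b"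
  unfolding Iff_def by (meson derivable_AndD derivable.mp)

lemma ICK_IffI: "Imp a b \<in> ICK \<Gamma> \<Longrightarrow> Imp b a \<in> ICK \<Gamma> \<Longrightarrow> Iff a b \<in> ICK \<Gamma>"
  using derivable_IffI derivable_empty by blast

lemma ICK_Cond_mono:
  assumes "Imp a b \<in> ICK \<Gamma>"
  shows "Imp (Cond c a) (Cond c b) \<in> ICK \<Gamma>"
proof -
  have "derivable {a} (And a b)"
    using assms by (meson derivable_AndI derivable.ICK derivable.hyp derivable.mp singletonI)
  then have "Iff a (And a b) \<in> ICK \<Gamma>"
    using ICK_IffI ICK.ax_conjE1 derivable_deduction derivable_empty by blast
  then have "derivable {Cond c a} (And (Cond c a) (Cond c b))"
    using ICK.cong_r ICK_Cond_And
    by (meson derivable_IffD derivable.ICK derivable.hyp singletonI)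
  then show ?thesis
    using derivable_AndD(2) derivable_deduction derivable_empty by blast
qed

definition prime_theory :: "form set \<Rightarrow> bool" where
  "prime_theory T \<longleftrightarrow>
     (\<forall>\<phi>. derivable T \<phi> \<longrightarrow> \<phi> \<in> T) \<and> Bot \<notin> T \<and> (\<forall>a b. Or a b \<in> T \<longrightarrow> a \<in> T \<or> b \<in> T)"

lemma prime_theory_closed: "prime_theory T \<Longrightarrow> derivable T \<phi> \<Longrightarrow> \<phi> \<in> T"
  unfolding prime_theory_def by blast

lemma prime_theory_ICK: "prime_theory T \<Longrightarrow> \<phi> \<in> ICK \<Gamma> \<Longrightarrow> \<phi> \<in> T"
  using prime_theory_closed derivable.ICK by blast

lemma prime_theory_mp: "prime_theory T \<Longrightarrow> Imp a b \<in> T \<Longrightarrow> a \<in> T \<Longrightarrow> b \<in> T"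
  using prime_theory_closed derivable.hyp derivable.mp by meson

lemma prime_theory_ICK_mp: "prime_theory T \<Longrightarrow> Imp a b \<in> ICK \<Gamma> \<Longrightarrow> a \<in> T \<Longrightarrow> b \<in> T"
  using prime_theory_ICK prime_theory_mp by blast

lemma prime_theory_ICK_Iff: "prime_theory T \<Longrightarrow> Iff a b \<in> ICK \<Gamma> \<Longrightarrow> a \<in> T \<longleftrightarrow> b \<in> T"
  unfolding Iff_def using ICK.ax_conjE1 ICK.ax_conjE2 ICK.mp prime_theory_ICK_mp by metis

lemma prime_theory_Bot: "prime_theory T \<Longrightarrow> Bot \<notin> T"
  unfolding prime_theory_def by blast

lemma prime_theory_And: "prime_theory T \<Longrightarrow> And a b \<in> T \<longleftrightarrow> a \<in> T \<and> b \<in> T"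
  by (meson ICK.ax_conjE1 ICK.ax_conjE2 derivable_AndI derivable.hyp prime_theory_ICK_mp
      prime_theory_closed)

lemma prime_theory_Or: "prime_theory T \<Longrightarrow> Or a b \<in> T \<longleftrightarrow> a \<in> T \<or> b \<in> T"
  using prime_theory_ICK_mp[OF _ ICK.ax_disjI1] prime_theory_ICK_mp[OF _ ICK.ax_disjI2]
  unfolding prime_theory_def by blast

lemma maximal_non_derivable:
  assumes "\<not> derivable H \<psi>"
  obtains M where "H \<subseteq> M" "\<not> derivable M \<psi>" "\<And>\<chi>. \<not> derivable (insert \<chi> M) \<psi> \<Longrightarrow> \<chi> \<in> M"
proof -
  let ?A = "{M. H \<subseteq> M \<and> \<not> derivable M \<psi>}"
  have "\<Union>C \<in> ?A" if "C \<noteq> {}" and chain: "subset.chain ?A C" for C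
  proof -
    have "\<not> derivable (\<Union>C) \<psi>"
    proof
      assume "derivable (\<Union>C) \<psi>"
      then obtain F where F: "finite F" "F \<subseteq> \<Union>C" "derivable F \<psi>"
        using derivable_finite_subset by blast
      then obtain M where "M \<in> C" "F \<subseteq> M"
        using finite_subset_Union_chain[OF F(1,2) \<open>C \<noteq> {}\<close> chain] by blast
      moreover have "\<not> derivable M \<psi>"
        using \<open>M \<in> C\<close> chain unfolding subset.chain_def by blast
      ultimately show False using F(3) derivable_mono by blast
    qed
    moreover have "H \<subseteq> \<Union>C"
      using that unfolding subset.chain_def by blast
    ultimately show ?thesis by blast
  qed
  moreover have "?A \<noteq> {}" using assms by blast
  ultimately obtain M where M: "M \<in> ?A" and max: "\<forall>M'\<in>?A. M \<subseteq> M' \<longrightarrow> M' = M"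
    using subset_Zorn_nonempty[of ?A] by blast
  have "\<chi> \<in> M" if "\<not> derivable (insert \<chi> M) \<psi>" for \<chi>
    using M max[rule_format, of "insert \<chi> M"] that by blast
  with M show thesis using that by blast
qed

lemma lindenbaum:
  assumes "\<not> derivable H \<psi>"
  obtains T where "prime_theory T" "H \<subseteq> T" "\<psi> \<notin> T"
proof -
  obtain M where HM: "H \<subseteq> M" and M: "\<not> derivable M \<psi>"
    and max: "\<And>\<chi>. \<not> derivable (insert \<chi> M) \<psi> \<Longrightarrow> \<chi> \<in> M"
    using maximal_non_derivable[OF assms] by blast
  have "\<chi> \<in> M" if "derivable M \<chi>" for \<chi>
    using max derivable_deduction derivable.mp M that by blast
  moreover have "Bot \<notin> M"
    using M by (meson ICK.ax_efq derivable.ICK derivable.hyp derivable.mp)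
  moreover have "a \<in> M \<or> b \<in> M" if "Or a b \<in> M" for a b
    using max derivable_deduction M that
    by (meson ICK.ax_disjE derivable.ICK derivable.hyp derivable.mp)
  ultimately have "prime_theory M" unfolding prime_theory_def by blast
  then show thesis using that HM M derivable.hyp by blast
qed

definition canon_worlds :: "form set set" where
  "canon_worlds = {T. prime_theory T}"

definition canon_extent :: "form \<Rightarrow> form set set" where
  "canon_extent \<phi> = {T \<in> canon_worlds. \<phi> \<in> T}"

(* Only extents of formulas carry a nonempty relation; by the congruence rule cong_l the
   formula chosen to represent an extent is irrelevant (canon_rel_extent). *)
definition canon_rel :: "form set set \<Rightarrow> form set \<Rightarrow> form set \<Rightarrow> bool" where
  "canon_rel a T U \<longleftrightarrow> T \<in> canon_worlds \<and> U \<in> canon_worlds \<and>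
     (\<exists>\<phi>. a = canon_extent \<phi> \<and> (\<forall>\<psi>. Cond \<phi> \<psi> \<in> T \<longrightarrow> \<psi> \<in> U))"

lemma ICK_Imp_if_canon_extent_subset:
  assumes "canon_extent a \<subseteq> canon_extent b"
  shows "Imp a b \<in> ICK \<Gamma>"
proof (rule ccontr)
  assume "Imp a b \<notin> ICK \<Gamma>"
  then have "\<not> derivable {a} b"
    using derivable_deduction derivable_empty by blast
  then obtain T where "prime_theory T" "a \<in> T" "b \<notin> T"
    using lindenbaum by blast
  then show False using assms unfolding canon_extent_def canon_worlds_def by blast
qed

lemma ICK_Iff_if_canon_extent_eq:
  "canon_extent a = canon_extent b \<Longrightarrow> Iff a b \<in> ICK \<Gamma>"
  using ICK_IffI ICK_Imp_if_canon_extent_subset by simp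

lemma canon_rel_extent:
  "canon_rel (canon_extent a) T U \<longleftrightarrow>
     T \<in> canon_worlds \<and> U \<in> canon_worlds \<and> (\<forall>\<psi>. Cond a \<psi> \<in> T \<longrightarrow> \<psi> \<in> U)"
proof -
  have "Cond a' \<psi> \<in> T"
    if "T \<in> canon_worlds" "canon_extent a = canon_extent a'" "Cond a \<psi> \<in> T" for a' \<psi>
    using that ICK.cong_l[OF ICK_Iff_if_canon_extent_eq] prime_theory_ICK_Iff
    unfolding canon_worlds_def by blast
  then show ?thesis unfolding canon_rel_def by blast
qed

lemma canon_worlds_Imp_iff:
  assumes "T \<in> canon_worlds"
  shows "Imp a b \<in> T \<longleftrightarrow> (\<forall>U\<in>canon_worlds. T \<subseteq> U \<longrightarrow> a \<in> U \<longrightarrow> b \<in> U)"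
proof
  show "Imp a b \<in> T \<Longrightarrow> \<forall>U\<in>canon_worlds. T \<subseteq> U \<longrightarrow> a \<in> U \<longrightarrow> b \<in> U"
    using prime_theory_mp unfolding canon_worlds_def by blast
next
  assume U: "\<forall>U\<in>canon_worlds. T \<subseteq> U \<longrightarrow> a \<in> U \<longrightarrow> b \<in> U"
  show "Imp a b \<in> T"
  proof (rule ccontr)
    assume "Imp a b \<notin> T"
    then have "\<not> derivable (insert a T) b"
      using assms derivable_deduction prime_theory_closed unfolding canon_worlds_def by blast
    then obtain U where "prime_theory U" "insert a T \<subseteq> U" "b \<notin> U"
      by (rule lindenbaum)
    then show False using U unfolding canon_worlds_def by blast
  qed
qed

(* The axiom C handles modus ponens, the axiom N the theorems of the logic. *)
lemma Cond_derivable_closed: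
  assumes T: "prime_theory T"
  shows "derivable {\<chi>. Cond a \<chi> \<in> T} \<psi> \<Longrightarrow> Cond a \<psi> \<in> T"
proof (induction rule: derivable.induct)
  case (ICK \<chi>)
  have "Iff \<chi> Top \<in> ICK \<Gamma>"
    using ICK ICK_IffI ICK.ax_K[of Top] ICK.ax_K[of \<chi>] ICK_Top by (meson ICK.mp)
  then show ?case
    using ICK.cong_r ICK_Cond_Top ICK_Top prime_theory_ICK_Iff[OF T] prime_theory_ICK[OF T]
    by metis
next
  case (mp b c)
  then have "Cond a (And (Imp b c) b) \<in> T"
    using prime_theory_And[OF T] prime_theory_ICK_Iff[OF T ICK_Cond_And] by blast
  moreover have "Imp (And (Imp b c) b) c \<in> ICK \<Gamma>"
    using derivable_AndD derivable.hyp derivable.mp derivable_deduction derivable_empty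
    by (meson singletonI)
  ultimately show ?case using ICK_Cond_mono prime_theory_ICK_mp[OF T] by blast
qed simp

lemma canon_worlds_Cond_iff:
  assumes T: "T \<in> canon_worlds"
  shows "Cond a b \<in> T \<longleftrightarrow> (\<forall>U. canon_rel (canon_extent a) T U \<longrightarrow> b \<in> U)"
proof
  show "Cond a b \<in> T \<Longrightarrow> \<forall>U. canon_rel (canon_extent a) T U \<longrightarrow> b \<in> U"
    using canon_rel_extent by blast
next
  assume U: "\<forall>U. canon_rel (canon_extent a) T U \<longrightarrow> b \<in> U"
  show "Cond a b \<in> T"
  proof (rule ccontr)
    assume "Cond a b \<notin> T"
    then have "\<not> derivable {\<chi>. Cond a \<chi> \<in> T} b"
      using Cond_derivable_closed T unfolding canon_worlds_def by blast
    then obtain U where "prime_theory U" "{\<chi>. Cond a \<chi> \<in> T} \<subseteq> U" "b \<notin> U"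
      by (rule lindenbaum)
    then show False
      using U T canon_rel_extent unfolding canon_worlds_def by blast
  qed
qed

lemma canon_truth:
  assumes "T \<in> canon_worlds"
  shows "sat canon_worlds (\<subseteq>) canon_rel (\<lambda>n. canon_extent (Atom n)) T \<phi> \<longleftrightarrow> \<phi> \<in> T"
  using assms
proof (induction \<phi> arbitrary: T)
  case (Atom n)
  then show ?case by (simp add: canon_extent_def)
next
  case Bot
  then show ?case using prime_theory_Bot by (simp add: canon_worlds_def)
next
  case (And a b)
  then show ?case using prime_theory_And by (simp add: canon_worlds_def)
next
  case (Or a b)
  then show ?case using prime_theory_Or by (simp add: canon_worlds_def)
next
  case (Imp a b)
  then show ?case by (simp add: canon_worlds_Imp_iff)
next
  case (Cond a b)
  have "{U \<in> canon_worlds. sat canon_worlds (\<subseteq>) canon_rel (\<lambda>n. canon_extent (Atom n)) U a}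
      = canon_extent a"
    using Cond.IH(1) unfolding canon_extent_def by blast
  moreover have "canon_rel (canon_extent a) T U \<Longrightarrow> U \<in> canon_worlds" for U
    by (simp add: canon_rel_extent)
  ultimately show ?case
    using Cond.IH(2) canon_worlds_Cond_iff[OF Cond.prems] by auto
qed

lemma canon_cond_frame:
  assumes "canon_worlds \<noteq> {}"
  shows "cond_frame canon_worlds (\<subseteq>) canon_rel"
  unfolding cond_frame_def
proof (intro conjI ballI allI impI)
  fix a T T' U'
  assume "T \<subseteq> T'" "canon_rel a T' U'" "T \<in> canon_worlds"
  then have "canon_rel a T U'" unfolding canon_rel_def by blast
  then show "\<exists>U\<in>canon_worlds. canon_rel a T U \<and> U \<subseteq> U'"
    unfolding canon_rel_def by blast
qed (use assms in \<open>auto simp: canon_rel_def\<close>)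

lemma canon_countermodel:
  assumes "\<phi> \<notin> ICK \<Gamma>"
  shows "canon_worlds \<noteq> {}" "\<not> valid_frame canon_worlds (\<subseteq>) canon_rel \<phi>"
proof -
  have "\<not> derivable {} \<phi>"
    using assms derivable_empty by blast
  then obtain T where "prime_theory T" "\<phi> \<notin> T"
    using lindenbaum by blast
  then have T: "T \<in> canon_worlds" "\<phi> \<notin> T"
    unfolding canon_worlds_def by simp_all
  then show "canon_worlds \<noteq> {}" by blast
  have "\<forall>n. upset canon_worlds (\<subseteq>) (canon_extent (Atom n))"
    unfolding upset_def canon_extent_def by blast
  then show "\<not> valid_frame canon_worlds (\<subseteq>) canon_rel \<phi>"
    using T canon_truth valid_frameD by metis
qed

lemma canon_rel_into:
  assumes "Cond (Atom 0) (Atom 0) \<in> ICK \<Gamma>" and "canon_rel a T U"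
  shows "U \<in> a"
proof -
  obtain \<phi> where "a = canon_extent \<phi>" "T \<in> canon_worlds" "U \<in> canon_worlds"
    "\<forall>\<psi>. Cond \<phi> \<psi> \<in> T \<longrightarrow> \<psi> \<in> U"
    using assms(2) unfolding canon_rel_def by blast
  moreover have "Cond \<phi> \<phi> \<in> ICK \<Gamma>"
    using ICK.us[OF assms(1), of "\<lambda>_. \<phi>"] by simp
  ultimately show ?thesis
    using prime_theory_ICK unfolding canon_worlds_def canon_extent_def by blast
qed

end

lemma ICK_id_sound:
  assumes "\<phi> \<in> ICK_id"
  shows "valid_class TYPE('w) \<phi>"
  unfolding valid_class_def
proof (intro allI impI)
  fix X :: "'w set" and le R
  assume id: "id_frame X le R"
  then have "cond_frame X le R"
    unfolding id_frame_def by simp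
  then show "valid_frame X le R \<phi>"
    using assms id_frame_valid_Cond_refl[OF id] unfolding ICK_id_def by (auto intro: ICK_sound)
qed

lemma ICK_id_complete:
  assumes "valid_class TYPE(form set) \<phi>"
  shows "\<phi> \<in> ICK_id"
proof (rule ccontr)
  let ?\<Gamma> = "{Cond (Atom 0) (Atom 0)}"
  assume "\<phi> \<notin> ICK_id"
  then have ne: "canon_worlds ?\<Gamma> \<noteq> {}"
    and invalid: "\<not> valid_frame (canon_worlds ?\<Gamma>) (\<subseteq>) (canon_rel ?\<Gamma>) \<phi>"
    using canon_countermodel unfolding ICK_id_def by simp_all
  have "id_frame (canon_worlds ?\<Gamma>) (\<subseteq>) (canon_rel ?\<Gamma>)"
    unfolding id_frame_def
    using canon_cond_frame[OF ne] canon_rel_into[OF ICK.ax_gamma] by blast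
  then show False
    using assms invalid unfolding valid_class_def by blast
qed

theorem proposition5p4:
  shows "(\<phi> \<in> ICK_id \<longrightarrow> valid_class TYPE('w) \<phi>)
       \<and> (\<phi> \<in> ICK_id \<longleftrightarrow> valid_class TYPE(form set) \<phi>)"
  using ICK_id_sound[where 'w = 'w] ICK_id_sound[where 'w = "form set"] ICK_id_complete
  by blast

end
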